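(* Let $d \ge 2$, let $P\colon\mathbb{R}\to\mathbb{R}^d$ be a polynomial, $K \geq 0$ an integer, $I = (a,b)$ with $a \geq 0$, $b - a = 1$, $\lambda_P(t) := t^{2K/(d(d+1))}$, and $Af(x,r) := \int_I f(x - rP(t))\lambda_P(t)\,\mathrm{d}t$. Let $E \subset \mathbb{R}^d$, $F \subset \mathbb{R}^d\times[1,2]$ be Borel sets of finite positive measure with $\langle A\chi_E,\chi_F\rangle \ne 0$, and set $\alpha := \langle A\chi_E,\chi_F\rangle/|F|$, $\beta := \langle A\chi_E,\chi_F\rangle/|E|$, assuming $\alpha > \beta$; let $\kappa := d(d+1)/(2K + d(d+1))$. Suppose $(x_0,r_0) \in F$ and $\{\Omega_j\}_{j=1}^{d+1}$ is a type 1 tower of height $d+1$ with the following properties (with implicit constants depending only on $d$ and $K$): 1) whenever $(\mathbf{r}_j,\mathbf{t}_j) \in \Omega_j$, one has $\alpha^\kappa \lesssim t_1 < t_2 < \dots < t_j$; 2) for odd $1 \le j \le d+1$: (i) $\Phi_j(\Omega_j) \subseteq E$; (ii) $\mu_P(\Omega_1) \gtrsim \alpha$ and, if $j>1$, $\mu_P(\Omega_j(\mathbf{r}_{j-1},\mathbf{t}_{j-1})) \gtrsim \alpha$ for all $(\mathbf{r}_{j-1},\mathbf{t}_{j-1}) \in \Omega_{j-1}$; (iii) if $j>1$ and $(\mathbf{r}_j,\mathbf{t}_j)\in\Omega_j$ then $\int_{t_{j-1}}^{t_j}\lambda_P(t)\,\mathrm{d}t \gtrsim \alpha$; 3) for even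 $1 < j \le d+1$: (i) $\Phi_j(\Omega_j) \subseteq F$; (ii) $\nu_P(\Omega_j(\mathbf{r}_{j-1},\mathbf{t}_{j-1})) \gtrsim \beta$ for all $(\mathbf{r}_{j-1},\mathbf{t}_{j-1}) \in \Omega_{j-1}$; (iii) if $(\mathbf{r}_j,\mathbf{t}_j)\in\Omega_j$ then $\int_{t_{j-1}}^{t_j}\lambda_P(t)\,\mathrm{d}t \gtrsim \beta$. Then: (i) if $1 < j \le d+1$ is odd, for all $(\mathbf{r}_j,\mathbf{t}_j)\in\Omega_j$ one has $t_j - t_i \gtrsim \alpha\, t_i^{-2K/(d(d+1))}$ for $1 \le i \le j-1$; (ii) if $1 < j \le d+1$ is even, for all $(\mathbf{r}_j,\mathbf{t}_j)\in\Omega_j$ one has $t_j - t_{j-1} \gtrsim \beta\, t_{j-1}^{-2K/(d(d+1))}$ and $t_j - t_i \gtrsim \alpha\, t_i^{-2K/(d(d+1))}$ for $1 \le i \le j-2$. The implicit constants in the conclusion depend only on $d$, $K$ and those in the hypotheses.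
   Context: $\mu_P$ is the measure $\lambda_P(t)\,\mathrm{d}t$ on $I$ and $\nu_P$ is the product of Lebesgue measure on $[1,2]$ with $\mu_P$. Write $\lfloor x\rfloor$ for the integer part. A type 1 tower of height $D$ is a collection of Borel sets $\Omega_j \subseteq [1,2]^{\lfloor j/2\rfloor} \times I^j$ ($1 \le j \le D$) of positive measure, whose elements are written $(\mathbf{r}_j,\mathbf{t}_j)$ with $\mathbf{r}_j = (r_1,\dots,r_{\lfloor j/2\rfloor})$, $\mathbf{t}_j = (t_1,\dots,t_j)$, such that for $1<j\le D$, $(\mathbf{r}_j,\mathbf{t}_j)\in\Omega_j$ implies $(\mathbf{r}_{j-1},\mathbf{t}_{j-1})\in\Omega_{j-1}$. For $(\mathbf{r}_{j-1},\mathbf{t}_{j-1})\in\Omega_{j-1}$ the fibre $\Omega_j(\mathbf{r}_{j-1},\mathbf{t}_{j-1})$ is $\{t_j\in I : (\mathbf{r}_j,\mathbf{t}_j)\in\Omega_j\}$ if $j$ is odd and $\{(r_{j/2},t_j)\in[1,2]\times I : (\mathbf{r}_j,\mathbf{t}_j)\in\Omega_j\}$ if $j$ is even. Given $(x_0,r_0)$, set $\Psi_j(\mathbf{r}_j,\mathbf{t}_j) := x_0 + \sum_{k=1}^j(-1)^k r_{\lfloor k/2\rfloor}P(t_k)$ (so the $k=1$ term uses the given $r_0$), and define $\Phi_j := \Psi_j$ on $\Omega_j$ for $j$ odd and $\Phi_j(\mathbf{r}_j,\mathbf{t}_j) := (\Psi_j(\mathbf{r}_j,\mathbf{t}_j),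 r_{j/2}) \in \mathbb{R}^d\times[1,2]$ for $j$ even. $X \lesssim Y$ means $X \le CY$ for a constant $C$ as specified. *)

theory Defs
  imports "HOL-Analysis.Analysis" "HOL-Computational_Algebra.Polynomial"
begin

definition lamP :: "nat \<Rightarrow> nat \<Rightarrow> real \<Rightarrow> real" where
  "lamP d K t = t powr (real (2 * K) / real (d * (d + 1)))"

definition muP :: "nat \<Rightarrow> nat \<Rightarrow> real measure" where
  "muP d K = density lborel (\<lambda>t. ennreal (lamP d K t))"

definition nuP :: "nat \<Rightarrow> nat \<Rightarrow> (real \<times> real) measure" where
  "nuP d K = lborel \<Otimes>\<^sub>M muP d K"

definition Apair :: "nat \<Rightarrow> nat \<Rightarrow> real \<Rightarrow> (real \<Rightarrow> real^'n) \<Rightarrow> (real^'n) set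
    \<Rightarrow> ((real^'n) \<times> real) set \<Rightarrow> real" where
  "Apair d K a P E F =
     (\<integral>xr. indicator F xr *
        (\<integral>t. indicator {a<..<a+1} t * indicator E (fst xr - snd xr *\<^sub>R P t) * lamP d K t \<partial>lborel)
      \<partial>lborel)"

text \<open>Psi_j; r is indexed from 1, the k=1 term uses r0.\<close>
definition Psi :: "real^'n \<Rightarrow> real \<Rightarrow> (real \<Rightarrow> real^'n) \<Rightarrow> nat \<Rightarrow> (nat \<Rightarrow> real) \<Rightarrow> (nat \<Rightarrow> real) \<Rightarrow> real^'n" where
  "Psi x0 r0 P j r t =
     x0 + (\<Sum>k=1..j. ((-1) ^ k * (if k div 2 = 0 then r0 else r (k div 2))) *\<^sub>R P (t k))"

text \<open>Points of Omega_j are pairs (r,t) of extensional functions,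
  r on {1..floor(j/2)}, t on {1..j}.\<close>
definition tower_space :: "nat \<Rightarrow> ((nat \<Rightarrow> real) \<times> (nat \<Rightarrow> real)) measure" where
  "tower_space j = PiM {1..j div 2} (\<lambda>_. lborel) \<Otimes>\<^sub>M PiM {1..j} (\<lambda>_. lborel)"

definition type1_tower :: "real \<Rightarrow> nat \<Rightarrow> (nat \<Rightarrow> ((nat \<Rightarrow> real) \<times> (nat \<Rightarrow> real)) set) \<Rightarrow> bool" where
  "type1_tower a D \<Omega> \<longleftrightarrow>
     (\<forall>j\<in>{1..D}. \<Omega> j \<in> sets (tower_space j) \<and>
        \<Omega> j \<subseteq> (PiE {1..j div 2} (\<lambda>_. {1..2})) \<times> (PiE {1..j} (\<lambda>_. {a<..<a+1})) \<and>
        emeasure (tower_space j) (\<Omega> j) > 0) \<and>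
     (\<forall>j\<in>{2..D}. \<forall>(r,t)\<in>\<Omega> j. (restrict r {1..(j-1) div 2}, restrict t {1..j-1}) \<in> \<Omega> (j-1))"

text \<open>Fibres over (r_{j-1}, t_{j-1}); for j = 1 the base point is the empty tuple.\<close>
definition fibre_odd :: "real \<Rightarrow> (nat \<Rightarrow> ((nat \<Rightarrow> real) \<times> (nat \<Rightarrow> real)) set) \<Rightarrow> nat
    \<Rightarrow> (nat \<Rightarrow> real) \<Rightarrow> (nat \<Rightarrow> real) \<Rightarrow> real set" where
  "fibre_odd a \<Omega> j r t = {s \<in> {a<..<a+1}. (r, t(j := s)) \<in> \<Omega> j}"

definition fibre_even :: "real \<Rightarrow> (nat \<Rightarrow> ((nat \<Rightarrow> real) \<times> (nat \<Rightarrow> real)) set) \<Rightarrow> nat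
    \<Rightarrow> (nat \<Rightarrow> real) \<Rightarrow> (nat \<Rightarrow> real) \<Rightarrow> (real \<times> real) set" where
  "fibre_even a \<Omega> j r t =
     {(\<rho>, s) \<in> {1..2} \<times> {a<..<a+1}. (r(j div 2 := \<rho>), t(j := s)) \<in> \<Omega> j}"

end

theory Submission imports Defs begin

text \<open>
  Every gap in the conclusion has the shape \<open>t\<^sub>j - t\<^sub>i\<close> with \<open>i \<le> m - 1 < m \<le> j\<close>, where
  \<open>[t\<^sub>m\<^sub>-\<^sub>1, t\<^sub>m]\<close> is a step of the tower carrying \<open>\<lambda>\<^sub>P\<close>-mass at least \<open>c\<alpha>\<close> (or \<open>c\<beta>\<close>).
  If \<open>t\<^sub>j \<le> 2t\<^sub>i\<close>, the weight \<open>t\<^sup>\<gamma>\<close> is at most \<open>(2t\<^sub>i)\<^sup>\<gamma>\<close> on that step, so its length, and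
  hence \<open>t\<^sub>j - t\<^sub>i\<close>, is \<open>\<gtrsim> \<alpha> t\<^sub>i\<^sup>-\<^sup>\<gamma>\<close>. Otherwise \<open>t\<^sub>j - t\<^sub>i > t\<^sub>i\<close>, and \<open>t\<^sub>i \<ge> t\<^sub>1 \<gtrsim> \<alpha>\<^sup>\<kappa>\<close> with
  \<open>\<kappa>(1 + \<gamma>) = 1\<close> gives \<open>t\<^sub>i = t\<^sub>i\<^sup>1\<^sup>+\<^sup>\<gamma> t\<^sub>i\<^sup>-\<^sup>\<gamma> \<gtrsim> \<alpha> t\<^sub>i\<^sup>-\<^sup>\<gamma>\<close>.
\<close>

lemma integral_powr_le:
  fixes u v g :: real
  assumes "0 < u" "u \<le> v" "0 \<le> g"
  shows "integral {u..v} (\<lambda>t. t powr g) \<le> (v - u) * v powr g"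
proof -
  have "continuous_on {u..v} (\<lambda>t. t powr g)"
    using assms by (intro continuous_intros) auto
  then have "integral {u..v} (\<lambda>t. t powr g) \<le> integral {u..v} (\<lambda>t. v powr g)"
    using assms by (intro integral_le integrable_continuous_interval) (auto intro!: powr_mono2)
  then show ?thesis
    using assms by simp
qed

lemma gap_lower_bound:
  fixes s u v T g X c c' C :: real
  assumes "0 < s" "s \<le> u" "u \<le> v" "v \<le> T" "0 \<le> g" "0 \<le> X"
    and mass: "c * X \<le> integral {u..v} (\<lambda>t. t powr g)"
    and size: "c' * X \<le> s powr (1 + g)"
    and C: "C \<le> c / 2 powr g" "C \<le> c'"
  shows "C * X * s powr (- g) \<le> T - s"
proof (cases "T \<le> 2 * s")
  case True
  have "c * X \<le> (v - u) * v powr g"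
    using mass integral_powr_le[of u v g] assms by linarith
  also have "\<dots> \<le> (T - s) * (2 * s) powr g"
    using assms True by (intro mult_mono powr_mono2) auto
  also have "\<dots> = 2 powr g * ((T - s) * s powr g)"
    using assms by (simp add: powr_mult)
  finally have "c / 2 powr g * X * s powr (- g) \<le> T - s"
    using assms by (simp add: powr_minus field_simps)
  moreover have "C * X * s powr (- g) \<le> c / 2 powr g * X * s powr (- g)"
    using assms by (intro mult_right_mono) auto
  ultimately show ?thesis
    by linarith
next
  case False
  have "C * X * s powr (- g) \<le> c' * X * s powr (- g)"
    using assms by (intro mult_right_mono) auto
  also have "\<dots> \<le> s powr (1 + g) * s powr (- g)"
    using size by (intro mult_right_mono) auto
  also have "\<dots> = s"
    using assms by (simp add: powr_add[symmetric])
  finally show ?thesis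
    using False by linarith
qed

lemma raise_to_inverse_exponent_le:
  fixes c x s \<kappa> \<gamma> :: real
  assumes "0 < c" "0 \<le> x" "\<kappa> * (1 + \<gamma>) = 1" "0 \<le> \<gamma>" "c * x powr \<kappa> \<le> s"
  shows "c powr (1 + \<gamma>) * x \<le> s powr (1 + \<gamma>)"
proof -
  have "c powr (1 + \<gamma>) * x = (c * x powr \<kappa>) powr (1 + \<gamma>)"
    using assms by (simp add: powr_mult powr_powr)
  also have "\<dots> \<le> s powr (1 + \<gamma>)"
    using assms by (intro powr_mono2) auto
  finally show ?thesis .
qed

lemma increasing_chain_le:
  fixes t :: "nat \<Rightarrow> real"
  assumes "\<forall>i\<in>{1..<j}. t i < t (i + 1)" "1 \<le> i" "i \<le> k" "k \<le> j"
  shows "t i \<le> t k"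
  using assms(3,4)
proof (induction k rule: dec_induct)
  case base
  then show ?case by simp
next
  case (step n)
  then have "t n < t (Suc n)"
    using assms(1,2) by auto
  with step show ?case by simp
qed

lemma chain_gap_lower_bound:
  fixes t :: "nat \<Rightarrow> real" and g X c c' C :: real
  assumes incr: "\<forall>i\<in>{1..<j}. t i < t (i + 1)"
    and "0 < t 1" "1 \<le> i" "i < m" "m \<le> j" "0 \<le> g" "0 \<le> X"
    and "c * X \<le> integral {t (m - 1)..t m} (\<lambda>t. t powr g)"
    and "c' * X \<le> t i powr (1 + g)"
    and "C \<le> c / 2 powr g" "C \<le> c'"
  shows "C * X * t i powr (- g) \<le> t j - t i"
proof (rule gap_lower_bound[where c = c and c' = c'])
  show "0 < t i"
    using assms increasing_chain_le[OF incr, of 1 i] by linarith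
  show "t i \<le> t (m - 1)" "t (m - 1) \<le> t m" "t m \<le> t j"
    using assms by (auto intro!: increasing_chain_le[OF incr])
qed (use assms in auto)

lemma exponent_conjugate_mult:
  fixes n m :: nat
  assumes "0 < n"
  shows "real n / real (m + n) * (1 + real m / real n) = 1"
proof -
  have "1 + real m / real n = real (m + n) / real n"
    using assms by (simp add: field_simps)
  then show ?thesis
    using assms by simp
qed

lemma Apair_nonneg: "0 \<le> Apair d K a P E F"
  unfolding Apair_def
  by (intro integral_nonneg_AE AE_I2 mult_nonneg_nonneg) (simp_all add: lamP_def)

lemma tower_time_gaps:
  fixes \<Omega> :: "nat \<Rightarrow> ((nat \<Rightarrow> real) \<times> (nat \<Rightarrow> real)) set"
    and \<alpha> \<beta> \<gamma> \<kappa> c_start c_odd c_even C :: real and D :: nat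
  assumes "0 \<le> \<beta>" "\<beta> < \<alpha>" "0 \<le> \<gamma>" "\<kappa> * (1 + \<gamma>) = 1" "0 < c_start"
    and C: "C \<le> min c_odd c_even / 2 powr \<gamma>" "C \<le> c_start powr (1 + \<gamma>)"
    and restr: "\<And>j r t. j \<in> {2..D} \<Longrightarrow> (r, t) \<in> \<Omega> j \<Longrightarrow>
      (restrict r {1..(j - 1) div 2}, restrict t {1..j - 1}) \<in> \<Omega> (j - 1)"
    and start: "\<And>j r t. j \<in> {1..D} \<Longrightarrow> (r, t) \<in> \<Omega> j \<Longrightarrow> c_start * \<alpha> powr \<kappa> \<le> t 1"
    and incr: "\<And>j r t. j \<in> {1..D} \<Longrightarrow> (r, t) \<in> \<Omega> j \<Longrightarrow> \<forall>i\<in>{1..<j}. t i < t (i + 1)"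
    and odd_step: "\<And>j r t. j \<in> {2..D} \<Longrightarrow> odd j \<Longrightarrow> (r, t) \<in> \<Omega> j \<Longrightarrow>
      c_odd * \<alpha> \<le> integral {t (j - 1)..t j} (\<lambda>t. t powr \<gamma>)"
    and even_step: "\<And>j r t. j \<in> {2..D} \<Longrightarrow> even j \<Longrightarrow> (r, t) \<in> \<Omega> j \<Longrightarrow>
      c_even * \<beta> \<le> integral {t (j - 1)..t j} (\<lambda>t. t powr \<gamma>)"
  shows "\<forall>j\<in>{2..D}. \<forall>(r, t)\<in>\<Omega> j.
    (odd j \<longrightarrow> (\<forall>i\<in>{1..j-1}. C * \<alpha> * t i powr (- \<gamma>) \<le> t j - t i)) \<and>
    (even j \<longrightarrow> C * \<beta> * t (j - 1) powr (- \<gamma>) \<le> t j - t (j - 1) \<and>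
                 (\<forall>i\<in>{1..j-2}. C * \<alpha> * t i powr (- \<gamma>) \<le> t j - t i))"
proof (intro ballI, clarify)
  fix j r t
  assume j: "j \<in> {2..D}" and rt: "(r, t) \<in> \<Omega> j"
  then have j1: "j \<in> {1..D}" by auto
  note incr_t = incr[OF j1 rt]
  have "0 < c_start * \<alpha> powr \<kappa>"
    using assms by simp
  then have t1: "0 < t 1"
    using start[OF j1 rt] by linarith
  have size_\<alpha>: "c_start powr (1 + \<gamma>) * \<alpha> \<le> t i powr (1 + \<gamma>)" if "i \<in> {1..j}" for i
    using assms start[OF j1 rt] increasing_chain_le[OF incr_t, of 1 i] that
    by (intro raise_to_inverse_exponent_le) auto
  have size_\<beta>: "c_start powr (1 + \<gamma>) * \<beta> \<le> t i powr (1 + \<gamma>)" if "i \<in> {1..j}" for i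
    using size_\<alpha>[OF that] assms by (smt (verit) mult_left_mono powr_gt_zero)
  have C_odd: "C \<le> c_odd / 2 powr \<gamma>" and C_even: "C \<le> c_even / 2 powr \<gamma>"
    using C by (smt (verit) divide_right_mono powr_ge_zero)+
  show "(odd j \<longrightarrow> (\<forall>i\<in>{1..j-1}. C * \<alpha> * t i powr (- \<gamma>) \<le> t j - t i)) \<and>
    (even j \<longrightarrow> C * \<beta> * t (j - 1) powr (- \<gamma>) \<le> t j - t (j - 1) \<and>
                 (\<forall>i\<in>{1..j-2}. C * \<alpha> * t i powr (- \<gamma>) \<le> t j - t i))"
  proof (intro conjI impI ballI)
    fix i
    assume "odd j" "i \<in> {1..j-1}"
    then show "C * \<alpha> * t i powr (- \<gamma>) \<le> t j - t i"
      using assms j rt t1 size_\<alpha>[of i] odd_step[OF j _ rt] C_odd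
      by (intro chain_gap_lower_bound[OF incr_t, where m = j and c = c_odd
          and c' = "c_start powr (1 + \<gamma>)"]) auto
  next
    assume "even j"
    then show "C * \<beta> * t (j - 1) powr (- \<gamma>) \<le> t j - t (j - 1)"
      using assms j t1 size_\<beta>[of "j - 1"] even_step[OF j _ rt] C_even
      by (intro chain_gap_lower_bound[OF incr_t, where m = j and c = c_even
          and c' = "c_start powr (1 + \<gamma>)"]) auto
  next
    fix i
    assume "even j" "i \<in> {1..j-2}"
    then have j4: "4 \<le> j" by presburger
    \<comment> \<open>the step \<open>[t\<^sub>j\<^sub>-\<^sub>2, t\<^sub>j\<^sub>-\<^sub>1]\<close> is the last step of the parent point in \<open>\<Omega>\<^sub>j\<^sub>-\<^sub>1\<close>, of odd level\<close>
    have parent: "c_odd * \<alpha> \<le> integral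
        {restrict t {1..j - 1} (j - 1 - 1)..restrict t {1..j - 1} (j - 1)} (\<lambda>t. t powr \<gamma>)"
      using j j4 \<open>even j\<close> by (intro odd_step[OF _ _ restr[OF j rt]]) auto
    have "restrict t {1..j - 1} (j - 1 - 1) = t (j - 2)" "restrict t {1..j - 1} (j - 1) = t (j - 1)"
      using j4 by (auto simp: numeral_2_eq_2)
    with parent have "c_odd * \<alpha> \<le> integral {t (j - 2)..t (j - 1)} (\<lambda>t. t powr \<gamma>)"
      by simp
    then show "C * \<alpha> * t i powr (- \<gamma>) \<le> t j - t i"
      using assms \<open>i \<in> {1..j-2}\<close> j4 t1 size_\<alpha>[of i] C_odd
      by (intro chain_gap_lower_bound[OF incr_t, where m = "j - 1" and c = c_odd
          and c' = "c_start powr (1 + \<gamma>)"])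
        (auto simp: numeral_2_eq_2)
  qed
qed

theorem corollary5p5:
  fixes K :: nat and c1 c2 c3 c4 c5 :: real
  assumes "CARD('n) \<ge> 2"
    and "c1 > 0" "c2 > 0" "c3 > 0" "c4 > 0" "c5 > 0"
  shows "\<exists>C>0. \<forall>(P :: real \<Rightarrow> real^'n) (a::real) E F (x0::real^'n) (r0::real) \<Omega>.
    (let d = CARD('n);
         \<alpha> = Apair d K a P E F / measure lborel F;
         \<beta> = Apair d K a P E F / measure lborel E;
         \<kappa> = real (d * (d + 1)) / real (2 * K + d * (d + 1));
         \<gamma> = real (2 * K) / real (d * (d + 1))
     in
     (\<forall>i. \<exists>p :: real poly. \<forall>t. P t $ i = poly p t) \<and>
     a \<ge> 0 \<and>
     E \<in> sets borel \<and> F \<in> sets borel \<and> F \<subseteq> UNIV \<times> {1..2} \<and>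
     0 < emeasure lborel E \<and> emeasure lborel E < \<infinity> \<and>
     0 < emeasure lborel F \<and> emeasure lborel F < \<infinity> \<and>
     Apair d K a P E F \<noteq> 0 \<and> \<alpha> > \<beta> \<and>
     (x0, r0) \<in> F \<and>
     type1_tower a (d + 1) \<Omega> \<and>
     (\<forall>j\<in>{1..d+1}. \<forall>(r,t)\<in>\<Omega> j.
        c1 * \<alpha> powr \<kappa> \<le> t 1 \<and> (\<forall>i\<in>{1..<j}. t i < t (i + 1))) \<and>
     (\<forall>j\<in>{1..d+1}. odd j \<longrightarrow>
        (\<forall>(r,t)\<in>\<Omega> j. Psi x0 r0 P j r t \<in> E) \<and>
        (j = 1 \<longrightarrow> ennreal (c2 * \<alpha>) \<le>
            emeasure (muP d K) (fibre_odd a \<Omega> 1 (\<lambda>_. undefined) (\<lambda>_. undefined))) \<and>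
        (j > 1 \<longrightarrow> (\<forall>(r,t)\<in>\<Omega> (j - 1).
            ennreal (c2 * \<alpha>) \<le> emeasure (muP d K) (fibre_odd a \<Omega> j r t))) \<and>
        (j > 1 \<longrightarrow> (\<forall>(r,t)\<in>\<Omega> j.
            c3 * \<alpha> \<le> integral {t (j - 1)..t j} (lamP d K)))) \<and>
     (\<forall>j\<in>{2..d+1}. even j \<longrightarrow>
        (\<forall>(r,t)\<in>\<Omega> j. (Psi x0 r0 P j r t, r (j div 2)) \<in> F) \<and>
        (\<forall>(r,t)\<in>\<Omega> (j - 1).
            ennreal (c4 * \<beta>) \<le> emeasure (nuP d K) (fibre_even a \<Omega> j r t)) \<and>
        (\<forall>(r,t)\<in>\<Omega> j. c5 * \<beta> \<le> integral {t (j - 1)..t j} (lamP d K)))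
     \<longrightarrow>
     (\<forall>j\<in>{2..d+1}. \<forall>(r,t)\<in>\<Omega> j.
        (odd j \<longrightarrow> (\<forall>i\<in>{1..j-1}. C * \<alpha> * t i powr (- \<gamma>) \<le> t j - t i)) \<and>
        (even j \<longrightarrow> C * \<beta> * t (j - 1) powr (- \<gamma>) \<le> t j - t (j - 1) \<and>
                     (\<forall>i\<in>{1..j-2}. C * \<alpha> * t i powr (- \<gamma>) \<le> t j - t i))))"
proof -
  define d where "d = CARD('n)"
  define \<gamma> :: real where "\<gamma> = real (2 * K) / real (d * (d + 1))"
  define \<kappa> :: real where "\<kappa> = real (d * (d + 1)) / real (2 * K + d * (d + 1))"
  define C where "C = min (min c3 c5 / 2 powr \<gamma>) (c1 powr (1 + \<gamma>))"
  have "0 < d * (d + 1)"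
    unfolding d_def by simp
  then have \<kappa>\<gamma>: "\<kappa> * (1 + \<gamma>) = 1"
    unfolding \<kappa>_def \<gamma>_def by (rule exponent_conjugate_mult)
  have \<lambda>: "lamP d K = (\<lambda>t. t powr \<gamma>)"
    by (simp add: lamP_def \<gamma>_def fun_eq_iff)
  have "0 < C"
    unfolding C_def using assms by simp
  show ?thesis
    unfolding Let_def d_def[symmetric] \<gamma>_def[symmetric] \<kappa>_def[symmetric] \<lambda>
  proof (intro exI[of _ C] conjI allI impI \<open>0 < C\<close>, elim conjE, goal_cases)
    case (1 P a E F x0 r0 \<Omega>)
    have "0 \<le> Apair d K a P E F / measure lborel E"
      by (intro divide_nonneg_nonneg Apair_nonneg) simp
    then show ?case
    proof (rule tower_time_gaps[where c_start = c1 and c_odd = c3 and c_even = c5 and \<kappa> = \<kappa>])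
      show "C \<le> min c3 c5 / 2 powr \<gamma>" "C \<le> c1 powr (1 + \<gamma>)"
        unfolding C_def by simp_all
      show "0 \<le> \<gamma>"
        unfolding \<gamma>_def by simp
      show "\<And>j r t. j \<in> {2..d + 1} \<Longrightarrow> (r, t) \<in> \<Omega> j \<Longrightarrow>
          (restrict r {1..(j - 1) div 2}, restrict t {1..j - 1}) \<in> \<Omega> (j - 1)"
        using 1(13) unfolding type1_tower_def by blast
    qed (use 1(11,14-16) \<kappa>\<gamma> assms(2) in fastforce)+
  qed
qed

end
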